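(* Let $\varepsilon_1>0$, $0<k<1$ and $E\ge1$. Then there exists $\varepsilon>0$ with the following property. Let $\mathcal{B}\subset\mathbb{R}^2$ be a (filled) ellipse centered at the origin, of eccentricity $\le E$ and diameter $\le\varepsilon_1$, and let $L\in\mathrm{SL}(2,\mathbb{R})$ satisfy $\|L-I\|<\varepsilon$ and $L(\mathcal{B})=\mathcal{B}$. Then there exists a $C^1$ area-preserving diffeomorphism $h:\mathbb{R}^2\to\mathbb{R}^2$ such that, with $\mathcal{B}'=\sqrt{k}\,\mathcal{B}$: (i) $z\notin\mathcal{B}\Rightarrow h(z)=z$; (ii) $z\in\mathcal{B}'\Rightarrow h(z)=L(z)$; (iii) $h$ preserves every ellipse $t\mathcal{B}$, $t>0$; (iv) $|h(z)-z|\le\varepsilon_1$ for all $z$; (v) $\|Dh_z-I\|\le\varepsilon_1$ for all $z$.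
   Context: A (filled) ellipse has eccentricity $E$ if it is the image of a disk under some $L\in\mathrm{SL}(2,\mathbb{R})$ with $\|L\|=E$; equivalently $E=\sqrt{\text{major axis}/\text{minor axis}}$. *)

theory Defs
  imports "HOL-Analysis.Analysis"
begin

definition opnorm :: "real^2^2 \<Rightarrow> real" where
  "opnorm M = onorm (\<lambda>x. M *v x)"

text \<open>A filled ellipse centred at the origin of eccentricity at most E:
  the image of a closed disk of radius r > 0 under some A in SL(2,R) with norm A <= E.\<close>
definition centered_ellipse_ecc_le :: "real \<Rightarrow> (real^2) set \<Rightarrow> bool" where
  "centered_ellipse_ecc_le E B \<longleftrightarrow>
     (\<exists>A r. det A = 1 \<and> opnorm A \<le> E \<and> r > 0 \<and> B = (\<lambda>x. A *v x) ` cball 0 r)"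

definition area_preserving :: "(real^2 \<Rightarrow> real^2) \<Rightarrow> bool" where
  "area_preserving h \<longleftrightarrow> h \<in> borel_measurable borel \<and>
     (\<forall>S \<in> sets borel. emeasure lborel (h -` S) = emeasure lborel S)"

definition C1_with_deriv :: "(real^2 \<Rightarrow> real^2) \<Rightarrow> (real^2 \<Rightarrow> real^2^2) \<Rightarrow> bool" where
  "C1_with_deriv h Dh \<longleftrightarrow>
     (\<forall>z. (h has_derivative (\<lambda>v. Dh z *v v)) (at z)) \<and> continuous_on UNIV Dh"

definition C1_diffeo :: "(real^2 \<Rightarrow> real^2) \<Rightarrow> bool" where
  "C1_diffeo h \<longleftrightarrow> bij h \<and> (\<exists>Dh. C1_with_deriv h Dh) \<and> (\<exists>Dg. C1_with_deriv (inv h) Dg)"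

end

theory Submission
  imports Defs
begin

text \<open>Write \<open>B = A(D\<^sub>r)\<close> with \<open>A \<in> SL(2,\<real>)\<close>, \<open>\<parallel>A\<parallel> \<le> E\<close>. The conjugate
  \<open>M = A\<^sup>-\<^sup>1 L A\<close> has determinant 1 and maps the disk \<open>D\<^sub>r\<close> into itself, so its columns have
  norm at most 1, which forces \<open>M\<close> to be a rotation; its angle \<open>\<theta>\<close> is \<open>O(E\<^sup>2 \<parallel>L - I\<parallel>)\<close>.
  On the disk use the twist \<open>y \<mapsto> R(\<phi>(|y|\<^sup>2)) y\<close>, which rotates the circle \<open>|y| = \<rho>\<close> by
  \<open>\<phi>(\<rho>\<^sup>2)\<close>, where \<open>\<phi>\<close> is a \<open>C\<^sup>1\<close> cutoff equal to \<open>\<theta>\<close> on \<open>[0, k r\<^sup>2]\<close> and to 0 on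
  \<open>[r\<^sup>2, \<infinity>)\<close>. Its Jacobian has determinant 1 and lies within \<open>|\<phi>| + 2|y|\<^sup>2|\<phi>'| = O(|\<theta>|/(1 - k))\<close>
  of the identity. Then \<open>h = A \<circ> twist \<circ> A\<^sup>-\<^sup>1\<close> agrees with \<open>A R\<^sub>\<theta> A\<^sup>-\<^sup>1 = L\<close> on \<open>\<surd>k B\<close>,
  is the identity off \<open>B\<close>, preserves every ellipse \<open>t B\<close>, and is area preserving by the change
  of variables formula.\<close>

lemma opnorm_le: "(\<And>x. norm (M *v x) \<le> b * norm x) \<Longrightarrow> opnorm M \<le> b"
  unfolding opnorm_def by (rule onorm_le)

lemma norm_le_opnorm: "norm (M *v x) \<le> opnorm M * norm x"
  unfolding opnorm_def by (rule onorm) simp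

lemma opnorm_nonneg: "0 \<le> opnorm M"
  unfolding opnorm_def by (rule onorm_pos_le) simp

section \<open>Rotations of the plane\<close>

definition quarter_turn :: "real^2 \<Rightarrow> real^2" where
  "quarter_turn v = vector [- v$2, v$1]"

definition rot :: "real \<Rightarrow> real^2 \<Rightarrow> real^2" where
  "rot t v = cos t *\<^sub>R v + sin t *\<^sub>R quarter_turn v"

lemma linear_quarter_turn: "linear quarter_turn"
  by (rule linearI) (simp_all add: quarter_turn_def vec_eq_iff forall_2)

lemma bounded_linear_quarter_turn: "bounded_linear quarter_turn"
  using linear_quarter_turn by (rule linear_conv_bounded_linear[THEN iffD1])

lemma inner_quarter_turn_self [simp]: "quarter_turn v \<bullet> v = 0" "v \<bullet> quarter_turn v = 0"
  by (simp_all add: quarter_turn_def inner_vec_def sum_2)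

lemma quarter_turn_quarter_turn [simp]: "quarter_turn (quarter_turn v) = - v"
  by (simp add: quarter_turn_def vec_eq_iff forall_2)

lemma norm_quarter_turn [simp]: "norm (quarter_turn v) = norm v"
  by (simp add: norm_eq_sqrt_inner quarter_turn_def inner_vec_def sum_2 add.commute)

lemma norm_scaleR_add_quarter_turn:
  "(norm (a *\<^sub>R v + b *\<^sub>R quarter_turn v))\<^sup>2 = (a\<^sup>2 + b\<^sup>2) * (norm v)\<^sup>2"
proof -
  have "(norm (a *\<^sub>R v + b *\<^sub>R quarter_turn v))\<^sup>2
      = a\<^sup>2 * (v \<bullet> v) + b\<^sup>2 * (quarter_turn v \<bullet> quarter_turn v)"
    unfolding power2_norm_eq_inner
    by (simp add: inner_add_left inner_add_right power2_eq_square algebra_simps)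
  then show ?thesis
    by (simp add: distrib_right flip: power2_norm_eq_inner)
qed

lemma bounded_linear_rot: "bounded_linear (rot t)"
  unfolding rot_def[abs_def]
  by (intro bounded_linear_add bounded_linear_scaleR_right bounded_linear_ident
      bounded_linear_compose[OF bounded_linear_scaleR_right bounded_linear_quarter_turn])

lemma rot_zero [simp]: "rot 0 v = v"
  by (simp add: rot_def)

lemma rot_rot: "rot s (rot t v) = rot (s + t) v"
  by (simp add: rot_def quarter_turn_def vec_eq_iff forall_2 cos_add sin_add algebra_simps)

lemma norm_rot [simp]: "norm (rot t v) = norm v"
  using norm_scaleR_add_quarter_turn[of "cos t" v "sin t"]
  by (simp add: rot_def power2_eq_iff_nonneg)

lemma one_minus_cos_le: "2 * (1 - cos t) \<le> t\<^sup>2" for t :: real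
proof -
  have "2 * (1 - cos t) = 4 * (sin (t / 2))\<^sup>2"
    using cos_double_sin[of "t / 2"] by simp
  also have "\<dots> \<le> 4 * (t / 2)\<^sup>2"
    using power_mono[OF abs_sin_x_le_abs_x abs_ge_zero, of "t / 2" 2] by (simp add: power_divide)
  finally show ?thesis
    by (simp add: power_divide)
qed

lemma norm_rot_sub_le: "norm (rot t v - v) \<le> \<bar>t\<bar> * norm v"
proof -
  have "(norm (rot t v - v))\<^sup>2 = ((cos t - 1)\<^sup>2 + (sin t)\<^sup>2) * (norm v)\<^sup>2"
    using norm_scaleR_add_quarter_turn[of "cos t - 1" v "sin t"]
    by (simp add: rot_def algebra_simps)
  also have "\<dots> = 2 * (1 - cos t) * (norm v)\<^sup>2"
    by (simp add: power2_diff algebra_simps)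
  also have "\<dots> \<le> (\<bar>t\<bar> * norm v)\<^sup>2"
    using one_minus_cos_le[of t] by (simp add: power_mult_distrib mult_right_mono)
  finally show ?thesis
    by (simp add: power2_le_iff_abs_le)
qed

section \<open>Twist maps\<close>

definition twist :: "(real \<Rightarrow> real) \<Rightarrow> real^2 \<Rightarrow> real^2" where
  "twist \<phi> y = rot (\<phi> ((norm y)\<^sup>2)) y"

text \<open>The angle derivative of \<^term>\<open>rot t y\<close> is \<^term>\<open>rot t (quarter_turn y)\<close>.\<close>

definition twist_deriv :: "(real \<Rightarrow> real) \<Rightarrow> (real \<Rightarrow> real) \<Rightarrow> real^2 \<Rightarrow> real^2^2" where
  "twist_deriv \<phi> \<phi>' y = matrix (\<lambda>v. rot (\<phi> ((norm y)\<^sup>2)) v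
     + (2 * \<phi>' ((norm y)\<^sup>2) * (y \<bullet> v)) *\<^sub>R rot (\<phi> ((norm y)\<^sup>2)) (quarter_turn y))"

lemma twist_deriv_apply:
  "twist_deriv \<phi> \<phi>' y *v v = rot (\<phi> ((norm y)\<^sup>2)) v
     + (2 * \<phi>' ((norm y)\<^sup>2) * (y \<bullet> v)) *\<^sub>R rot (\<phi> ((norm y)\<^sup>2)) (quarter_turn y)"
proof -
  have "bounded_linear (\<lambda>v. rot (\<phi> ((norm y)\<^sup>2)) v
     + (2 * \<phi>' ((norm y)\<^sup>2) * (y \<bullet> v)) *\<^sub>R rot (\<phi> ((norm y)\<^sup>2)) (quarter_turn y))"
    by (intro bounded_linear_add bounded_linear_rot bounded_linear_compose[OF bounded_linear_scaleR_left]
        bounded_linear_compose[OF bounded_linear_mult_right bounded_linear_inner_right])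
  from matrix_vector_mul(3)[OF this] show ?thesis
    unfolding twist_deriv_def by (rule fun_cong)
qed

lemma norm_twist [simp]: "norm (twist \<phi> y) = norm y"
  by (simp add: twist_def)

lemma twist_inverse: "twist (\<lambda>u. - \<phi> u) (twist \<phi> y) = y"
  by (simp add: twist_def rot_rot)

lemma twist_image_cball: "twist \<phi> ` cball 0 \<rho> = cball 0 \<rho>"
proof
  show "twist \<phi> ` cball 0 \<rho> \<subseteq> cball 0 \<rho>"
    by auto
  show "cball 0 \<rho> \<subseteq> twist \<phi> ` cball 0 \<rho>"
  proof
    fix z :: "real^2"
    assume "z \<in> cball 0 \<rho>"
    moreover have "z = twist \<phi> (twist (\<lambda>u. - \<phi> u) z)"
      using twist_inverse[of "\<lambda>u. - \<phi> u" z] by simp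
    ultimately show "z \<in> twist \<phi> ` cball 0 \<rho>"
      by (metis image_eqI mem_cball_0 norm_twist)
  qed
qed

lemma has_derivative_twist:
  assumes "\<And>u. (\<phi> has_real_derivative \<phi>' u) (at u)"
  shows "(twist \<phi> has_derivative (\<lambda>v. twist_deriv \<phi> \<phi>' y *v v)) (at y)"
proof -
  define \<alpha> where "\<alpha> y = \<phi> (y \<bullet> y)" for y :: "real^2"
  have d\<alpha>: "(\<alpha> has_derivative (\<lambda>v. (2 * (y \<bullet> v)) * \<phi>' (y \<bullet> y))) (at y)"
    unfolding \<alpha>_def
    by (rule has_derivative_eq_rhs[OF DERIV_compose_FDERIV[OF assms
          has_derivative_inner[OF has_derivative_ident has_derivative_ident]]])
      (simp add: inner_commute)
  have dJ: "(quarter_turn has_derivative quarter_turn) (at y)"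
    by (rule bounded_linear_imp_has_derivative[OF bounded_linear_quarter_turn])
  have "((\<lambda>y. cos (\<alpha> y) *\<^sub>R y + sin (\<alpha> y) *\<^sub>R quarter_turn y) has_derivative
      (\<lambda>v. twist_deriv \<phi> \<phi>' y *v v)) (at y)"
    by (rule has_derivative_eq_rhs,
        (rule has_derivative_add has_derivative_scaleR has_derivative_ident dJ
          DERIV_compose_FDERIV[OF DERIV_cos d\<alpha>] DERIV_compose_FDERIV[OF DERIV_sin d\<alpha>])+)
      (auto simp: twist_deriv_apply rot_def \<alpha>_def power2_norm_eq_inner fun_eq_iff
        linear_add[OF linear_quarter_turn] linear_scale[OF linear_quarter_turn] algebra_simps)
  then show ?thesis
    by (simp add: twist_def[abs_def] rot_def \<alpha>_def power2_norm_eq_inner)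
qed

lemma continuous_on_twist_deriv:
  assumes "continuous_on UNIV \<phi>" "continuous_on UNIV \<phi>'"
  shows "continuous_on UNIV (twist_deriv \<phi> \<phi>')"
proof -
  have norm_sq: "continuous_on UNIV (\<lambda>y::real^2. (norm y)\<^sup>2)"
    by (intro continuous_intros)
  have "continuous_on UNIV (\<lambda>y::real^2. \<phi> ((norm y)\<^sup>2))"
    "continuous_on UNIV (\<lambda>y::real^2. \<phi>' ((norm y)\<^sup>2))"
    by (auto intro: continuous_on_compose2[OF _ norm_sq] assms)
  moreover have "continuous_on UNIV quarter_turn"
    by (rule linear_continuous_on[OF bounded_linear_quarter_turn])
  ultimately show ?thesis
    unfolding twist_deriv_def matrix_def rot_def quarter_turn_quarter_turn
    by (intro continuous_on_vec_lambda continuous_intros)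
qed

lemma det_twist_deriv: "det (twist_deriv \<phi> \<phi>' y) = 1"
proof -
  have "det (twist_deriv \<phi> \<phi>' y) = (cos (\<phi> ((norm y)\<^sup>2)))\<^sup>2 + (sin (\<phi> ((norm y)\<^sup>2)))\<^sup>2"
    unfolding det_2 twist_deriv_def matrix_def
    by (simp add: rot_def quarter_turn_def axis_def inner_vec_def sum_2 power2_eq_square algebra_simps)
  then show ?thesis
    by simp
qed

lemma opnorm_twist_deriv_sub_id_le:
  "opnorm (twist_deriv \<phi> \<phi>' y - mat 1)
     \<le> \<bar>\<phi> ((norm y)\<^sup>2)\<bar> + 2 * (norm y)\<^sup>2 * \<bar>\<phi>' ((norm y)\<^sup>2)\<bar>"
proof (rule opnorm_le)
  fix v :: "real^2"
  let ?t = "\<phi> ((norm y)\<^sup>2)" and ?c = "2 * \<phi>' ((norm y)\<^sup>2)"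
  have "norm ((twist_deriv \<phi> \<phi>' y - mat 1) *v v)
      = norm ((rot ?t v - v) + (?c * (y \<bullet> v)) *\<^sub>R rot ?t (quarter_turn y))"
    by (simp add: matrix_vector_mult_diff_rdistrib twist_deriv_apply algebra_simps)
  also have "\<dots> \<le> norm (rot ?t v - v) + \<bar>?c\<bar> * \<bar>y \<bullet> v\<bar> * norm y"
    by (rule norm_triangle_le) (simp add: abs_mult)
  also have "\<dots> \<le> \<bar>?t\<bar> * norm v + \<bar>?c\<bar> * (norm y * norm v) * norm y"
    by (intro add_mono norm_rot_sub_le mult_right_mono mult_left_mono Cauchy_Schwarz_ineq2) auto
  also have "\<dots> = (\<bar>?t\<bar> + 2 * (norm y)\<^sup>2 * \<bar>\<phi>' ((norm y)\<^sup>2)\<bar>) * norm v"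
    by (simp add: abs_mult power2_eq_square algebra_simps)
  finally show "norm ((twist_deriv \<phi> \<phi>' y - mat 1) *v v)
      \<le> (\<bar>?t\<bar> + 2 * (norm y)\<^sup>2 * \<bar>\<phi>' ((norm y)\<^sup>2)\<bar>) * norm v" .
qed

section \<open>Matrices of determinant one preserving an ellipse\<close>

lemma matrix_inv_invertible:
  fixes A :: "'a::semiring_1^'n^'n"
  assumes "invertible A"
  shows "A ** matrix_inv A = mat 1" "matrix_inv A ** A = mat 1"
  using someI_ex[OF assms[unfolded invertible_def]] by (simp_all add: matrix_inv_def)

lemma invertible_sl2: "det (A :: real^2^2) = 1 \<Longrightarrow> invertible A"
  by (simp add: invertible_det_nz)

text \<open>The inverse of \<open>A \<in> SL(2)\<close> is its adjugate \<open>J\<^sup>-\<^sup>1 A\<^sup>T J\<close>, with \<open>J\<close> the quarter turn.\<close>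

lemma matrix_inv_sl2_apply:
  assumes "det (A :: real^2^2) = 1"
  shows "matrix_inv A *v v = - quarter_turn (quarter_turn v v* A)"
proof -
  let ?w = "- quarter_turn (quarter_turn v v* A)"
  have "A *v ?w = v"
    using assms
    by (simp add: det_2 quarter_turn_def vec_eq_iff forall_2 matrix_vector_mult_def sum_2
        vector_matrix_mult_def algebra_simps)
  then have "matrix_inv A *v v = (matrix_inv A ** A) *v ?w"
    by (simp flip: matrix_vector_mul_assoc)
  then show ?thesis
    by (simp add: matrix_inv_invertible invertible_sl2 assms)
qed

lemma norm_vector_matrix_mult_le:
  fixes A :: "real^'n^'m"
  shows "norm (w v* A) \<le> onorm (\<lambda>x. A *v x) * norm w"
proof (cases "w v* A = 0")
  case False
  have "(norm (w v* A))\<^sup>2 = w \<bullet> (A *v (w v* A))"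
    by (simp add: power2_norm_eq_inner dot_lmul_matrix)
  also have "\<dots> \<le> norm w * (onorm (\<lambda>x. A *v x) * norm (w v* A))"
    by (intro order_trans[OF norm_cauchy_schwarz] mult_left_mono onorm) simp_all
  finally show ?thesis
    using False by (simp add: power2_eq_square algebra_simps)
qed (simp add: onorm_pos_le)

lemma opnorm_matrix_inv_sl2_le: "det A = 1 \<Longrightarrow> opnorm (matrix_inv A) \<le> opnorm A"
  using norm_vector_matrix_mult_le[of "quarter_turn _" A, folded opnorm_def]
  by (intro opnorm_le) (simp add: matrix_inv_sl2_apply)

lemma opnorm_conj_sub_id_le:
  assumes "A ** B = mat 1"
  shows "opnorm (A ** X ** B - mat 1) \<le> opnorm A * opnorm (X - mat 1) * opnorm B"
proof (rule opnorm_le)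
  fix v :: "real^2"
  have "(A ** X ** B - mat 1) *v v = A *v (X *v (B *v v)) - A *v (B *v v)"
    using assms by (simp add: matrix_vector_mult_diff_rdistrib matrix_vector_mul_assoc matrix_mul_assoc)
  also have "\<dots> = A *v ((X - mat 1) *v (B *v v))"
    by (simp add: matrix_vector_mult_diff_rdistrib matrix_vector_mult_diff_distrib)
  also have "norm \<dots> \<le> opnorm A * (opnorm (X - mat 1) * (opnorm B * norm v))"
    by (intro order_trans[OF norm_le_opnorm] mult_left_mono opnorm_nonneg order_refl)
  finally show "norm ((A ** X ** B - mat 1) *v v) \<le> opnorm A * opnorm (X - mat 1) * opnorm B * norm v"
    by (simp add: mult.assoc)
qed

lemma nonexpanding_if_image_cball_subset:
  fixes f :: "'a::real_normed_vector \<Rightarrow> 'b::real_normed_vector"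
  assumes "linear f" "0 < r" "f ` cball 0 r \<subseteq> cball 0 r"
  shows "norm (f v) \<le> norm v"
proof (cases "v = 0")
  case False
  let ?c = "r / norm v"
  have "?c *\<^sub>R v \<in> cball 0 r"
    using assms(2) False by simp
  then have "norm (f (?c *\<^sub>R v)) \<le> r"
    using assms(3) by (metis image_subset_iff mem_cball_0)
  then have "?c * norm (f v) \<le> ?c * norm v"
    using assms(1,2) False by (simp add: linear_scale)
  moreover have "0 < ?c"
    using assms(2) False by simp
  ultimately show ?thesis
    by (simp only: mult_le_cancel_left_pos)
qed (simp add: linear_0[OF assms(1)])

lemma sl2_nonexpanding_is_rotation:
  fixes M :: "real^2^2"
  assumes "det M = 1" and nonexpanding: "\<And>v. norm (M *v v) \<le> norm v"
  shows "(M$1$1)\<^sup>2 + (M$2$1)\<^sup>2 = 1" "M *v v = M$1$1 *\<^sub>R v + M$2$1 *\<^sub>R quarter_turn v"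
proof -
  have column_bound: "(M$1$j)\<^sup>2 + (M$2$j)\<^sup>2 \<le> 1" for j
  proof -
    have "(norm (M *v axis j 1))\<^sup>2 \<le> 1"
      using nonexpanding[of "axis j 1"] by (simp add: power_le_one)
    moreover have "(norm (M *v axis j 1))\<^sup>2 = (M$1$j)\<^sup>2 + (M$2$j)\<^sup>2"
      unfolding power2_norm_eq_inner
      by (simp add: matrix_vector_mult_basis column_def inner_vec_def sum_2 power2_eq_square)
    ultimately show ?thesis
      by simp
  qed
  have det: "M$1$1 * M$2$2 - M$1$2 * M$2$1 = 1"
    using assms(1) by (simp add: det_2)
  txt \<open>Equality case of Hadamard's inequality.\<close>
  have "(M$1$1 - M$2$2)\<^sup>2 + (M$1$2 + M$2$1)\<^sup>2
      = ((M$1$1)\<^sup>2 + (M$2$1)\<^sup>2) + ((M$1$2)\<^sup>2 + (M$2$2)\<^sup>2) - 2 * (M$1$1 * M$2$2 - M$1$2 * M$2$1)"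
    by (simp add: power2_eq_square algebra_simps)
  also have "\<dots> \<le> 0"
    using column_bound[of 1] column_bound[of 2] det by simp
  finally have "M$2$2 = M$1$1" "M$1$2 = - M$2$1"
    by (simp_all only: sum_power2_le_zero_iff) simp_all
  then show "(M$1$1)\<^sup>2 + (M$2$1)\<^sup>2 = 1" "M *v v = M$1$1 *\<^sub>R v + M$2$1 *\<^sub>R quarter_turn v"
    using det by (simp_all add: power2_eq_square matrix_vector_mult_def sum_2 quarter_turn_def
        vec_eq_iff forall_2)
qed

lemma arctan_unit_vector:
  assumes "c\<^sup>2 + s\<^sup>2 = 1" "0 < c"
  shows "cos (arctan (s / c)) = c" "sin (arctan (s / c)) = s"
proof -
  have "sqrt (1 + (s / c)\<^sup>2) = 1 / c"
    using assms by (simp add: field_simps real_sqrt_divide)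
  then show "cos (arctan (s / c)) = c" "sin (arctan (s / c)) = s"
    using assms(2) by (simp_all add: cos_arctan sin_arctan)
qed

lemma sl2_nonexpanding_near_id_is_small_rotation:
  fixes M :: "real^2^2"
  assumes "det M = 1" "\<And>v. norm (M *v v) \<le> norm v" "opnorm (M - mat 1) \<le> 1/2"
  obtains \<theta> where "\<bar>\<theta>\<bar> \<le> 2 * opnorm (M - mat 1)" "\<And>v. M *v v = rot \<theta> v"
proof -
  let ?c = "M$1$1" and ?s = "M$2$1"
  have unit: "?c\<^sup>2 + ?s\<^sup>2 = 1" and M: "\<And>v. M *v v = ?c *\<^sub>R v + ?s *\<^sub>R quarter_turn v"
    using sl2_nonexpanding_is_rotation[OF assms(1,2)] by blast+
  have "\<bar>(M - mat 1) $ i $ j\<bar> \<le> opnorm (M - mat 1)" for i j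
    using component_le_norm_cart[of "(M - mat 1) *v axis j 1" i]
      norm_le_opnorm[of "M - mat 1" "axis j 1"]
    by (simp add: matrix_vector_mult_basis column_def)
  from this[of 1 1] this[of 2 1] have "\<bar>?c - 1\<bar> \<le> opnorm (M - mat 1)" "\<bar>?s\<bar> \<le> opnorm (M - mat 1)"
    by (simp_all add: mat_def)
  with assms(3) have "1/2 \<le> ?c" "\<bar>?s\<bar> \<le> opnorm (M - mat 1)"
    by linarith+
  show ?thesis
  proof
    have "\<bar>arctan (?s / ?c)\<bar> \<le> \<bar>?s\<bar> / ?c"
      using abs_arctan_le[of "?s / ?c"] \<open>1/2 \<le> ?c\<close> by simp
    also have "\<dots> \<le> \<bar>?s\<bar> / (1/2)"
      using \<open>1/2 \<le> ?c\<close> by (intro divide_left_mono) auto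
    finally show "\<bar>arctan (?s / ?c)\<bar> \<le> 2 * opnorm (M - mat 1)"
      using \<open>\<bar>?s\<bar> \<le> opnorm (M - mat 1)\<close> by simp
    show "M *v v = rot (arctan (?s / ?c)) v" for v
      using arctan_unit_vector[OF unit] \<open>1/2 \<le> ?c\<close> by (simp add: M rot_def)
  qed
qed

lemma det_matrix_inv_sl2: "det A = 1 \<Longrightarrow> det (matrix_inv (A :: real^2^2)) = 1"
  using det_mul[of A "matrix_inv A"] by (simp add: matrix_inv_invertible invertible_sl2)

lemma matrix_inv_sl2_cancel:
  assumes "det (A :: real^2^2) = 1"
  shows "matrix_inv A *v (A *v y) = y" "A *v (matrix_inv A *v y) = y"
  using assms by (simp_all add: matrix_vector_mul_assoc matrix_inv_invertible invertible_sl2)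

lemma invariant_ellipse_sl2_is_conj_small_rotation:
  fixes A L :: "real^2^2"
  assumes "det A = 1" "det L = 1" "0 < r"
    and invariant: "(\<lambda>x. L *v x) ` ((\<lambda>x. A *v x) ` cball 0 r) = (\<lambda>x. A *v x) ` cball 0 r"
    and small: "opnorm A * opnorm (matrix_inv A) * opnorm (L - mat 1) \<le> 1/2"
  obtains \<theta> where "\<bar>\<theta>\<bar> \<le> 2 * (opnorm A * opnorm (matrix_inv A) * opnorm (L - mat 1))"
    "\<And>z. L *v z = A *v rot \<theta> (matrix_inv A *v z)"
proof -
  let ?A' = "matrix_inv A"
  define M where "M = ?A' ** L ** A"
  have inv: "?A' ** A = mat 1"
    using matrix_inv_invertible invertible_sl2 assms(1) by blast
  have "det M = 1"
    using assms(1,2) by (simp add: M_def det_mul det_matrix_inv_sl2)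
  moreover have "norm (M *v v) \<le> norm v" for v
  proof (rule nonexpanding_if_image_cball_subset[OF _ \<open>0 < r\<close>])
    show "linear ((*v) M)"
      by (rule matrix_vector_mul_linear)
    show "(*v) M ` cball 0 r \<subseteq> cball 0 r"
    proof clarify
      fix y :: "real^2"
      assume "y \<in> cball 0 r"
      then obtain y' where "L *v (A *v y) = A *v y'" "y' \<in> cball 0 r"
        using invariant by blast
      then show "M *v y \<in> cball 0 r"
        using assms(1) by (simp add: M_def matrix_inv_sl2_cancel flip: matrix_vector_mul_assoc)
    qed
  qed
  moreover have "opnorm (M - mat 1) \<le> opnorm A * opnorm ?A' * opnorm (L - mat 1)"
    using opnorm_conj_sub_id_le[OF inv, of L] by (simp add: M_def mult_ac)
  ultimately obtain \<theta> where "\<bar>\<theta>\<bar> \<le> 2 * opnorm (M - mat 1)" "\<And>v. M *v v = rot \<theta> v"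
    using sl2_nonexpanding_near_id_is_small_rotation small by (metis order_trans)
  show ?thesis
  proof
    show "\<bar>\<theta>\<bar> \<le> 2 * (opnorm A * opnorm ?A' * opnorm (L - mat 1))"
      using \<open>\<bar>\<theta>\<bar> \<le> 2 * opnorm (M - mat 1)\<close> \<open>opnorm (M - mat 1) \<le> _\<close> by linarith
    show "L *v z = A *v rot \<theta> (matrix_inv A *v z)" for z
      using assms(1) by (simp flip: \<open>\<And>v. M *v v = rot \<theta> v\<close> matrix_vector_mul_assoc
          add: M_def matrix_inv_sl2_cancel)
  qed
qed

section \<open>A \<open>C\<^sup>1\<close> cutoff\<close>

lemma has_real_derivative_max0_sq: "((\<lambda>v. (max 0 v)\<^sup>2) has_real_derivative 2 * max 0 v) (at v)"
proof -
  have "((\<lambda>v. if v \<in> {..0} then 0 else v\<^sup>2) has_derivative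
      (if v \<in> {..0} then (\<lambda>h. 0) else (\<lambda>h. 2 * v * h))) (at v within {..0} \<union> {0..})"
    by (rule has_derivative_If_within_closures) (auto intro!: derivative_eq_intros)
  moreover have "(\<lambda>v. if v \<in> {..0} then 0 else v\<^sup>2) = (\<lambda>v::real. (max 0 v)\<^sup>2)"
    by (auto simp: max_def)
  moreover have "(if v \<in> {..0} then (\<lambda>h. 0) else (\<lambda>h. 2 * v * h)) = (\<lambda>h. 2 * max 0 v * h)"
    by (auto simp: max_def fun_eq_iff)
  moreover have "{..0} \<union> {0..} = (UNIV :: real set)"
    by auto
  ultimately show ?thesis
    by (simp add: has_field_derivative_def)
qed

text \<open>\<^term>\<open>smooth_step v\<close> is \<open>2v\<^sup>2\<close> on \<open>[0, 1/2]\<close> and \<open>1 - 2(1 - v)\<^sup>2\<close> on \<open>[1/2, 1]\<close>.\<close>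

definition smooth_step :: "real \<Rightarrow> real" where
  "smooth_step v = 2 * ((max 0 v)\<^sup>2 - 2 * (max 0 (v - 1/2))\<^sup>2 + (max 0 (v - 1))\<^sup>2)"

definition smooth_step_deriv :: "real \<Rightarrow> real" where
  "smooth_step_deriv v = 4 * (max 0 v - 2 * max 0 (v - 1/2) + max 0 (v - 1))"

lemma has_real_derivative_smooth_step:
  "(smooth_step has_real_derivative smooth_step_deriv v) (at v)"
proof -
  have shifted: "((\<lambda>v. (max 0 (v - c))\<^sup>2) has_real_derivative 2 * max 0 (v - c)) (at v)" for c
    by (rule DERIV_chain2[OF has_real_derivative_max0_sq, of "\<lambda>v. v - c" 1, simplified])
      (auto intro!: derivative_eq_intros)
  have "((\<lambda>v. 2 * ((max 0 (v - 0))\<^sup>2 - 2 * (max 0 (v - 1/2))\<^sup>2 + (max 0 (v - 1))\<^sup>2))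
      has_real_derivative
        2 * (2 * max 0 (v - 0) - 2 * (2 * max 0 (v - 1/2)) + 2 * max 0 (v - 1))) (at v)"
    by (intro DERIV_cmult DERIV_add DERIV_diff shifted)
  then show ?thesis
    by (simp add: smooth_step_def[abs_def] smooth_step_deriv_def)
qed

lemma continuous_on_smooth_step_deriv: "continuous_on UNIV smooth_step_deriv"
  unfolding smooth_step_deriv_def by (intro continuous_intros)

lemma smooth_step_eq_0: "v \<le> 0 \<Longrightarrow> smooth_step v = 0"
  by (simp add: smooth_step_def)

lemma smooth_step_eq_1: "1 \<le> v \<Longrightarrow> smooth_step v = 1"
  by (simp add: smooth_step_def power2_eq_square algebra_simps)

lemma smooth_step_deriv_eq_0: "1 \<le> v \<Longrightarrow> smooth_step_deriv v = 0"
  by (simp add: smooth_step_deriv_def)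

lemma smooth_step_bounds: "0 \<le> smooth_step v \<and> smooth_step v \<le> 1"
proof -
  consider "v \<le> 0" | "0 \<le> v" "v \<le> 1/2" | "1/2 \<le> v" "v \<le> 1" | "1 \<le> v"
    by linarith
  then show ?thesis
  proof cases
    case 2
    then have "smooth_step v = 2 * v\<^sup>2" and "v\<^sup>2 \<le> (1/2)\<^sup>2"
      by (auto simp: smooth_step_def intro!: power_mono)
    then show ?thesis
      by (simp add: power_divide)
  next
    case 3
    then have "smooth_step v = 1 - 2 * (1 - v)\<^sup>2"
      by (simp add: smooth_step_def power2_eq_square algebra_simps)
    moreover have "(1 - v)\<^sup>2 \<le> (1/2)\<^sup>2"
      using 3 by (intro power_mono) auto
    ultimately show ?thesis
      by (simp add: power_divide)
  qed (simp_all add: smooth_step_eq_0 smooth_step_eq_1)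
qed

lemma smooth_step_deriv_bounds: "0 \<le> smooth_step_deriv v \<and> smooth_step_deriv v \<le> 2"
  by (simp add: smooth_step_deriv_def max_def)

lemma mult_smooth_step_deriv_le:
  assumes "0 \<le> a" "a < b" "0 \<le> u"
  shows "u * smooth_step_deriv ((u - a) / (b - a)) \<le> b * 2"
proof (cases "b \<le> u")
  case False
  then show ?thesis
    using assms smooth_step_deriv_bounds[of "(u - a) / (b - a)"] by (intro mult_mono) auto
qed (use assms in \<open>simp add: smooth_step_deriv_eq_0\<close>)

lemma C1_cutoff:
  fixes a b \<theta> :: real
  assumes "0 \<le> a" "a < b"
  obtains \<phi> \<phi>' where "\<And>u. (\<phi> has_real_derivative \<phi>' u) (at u)"
    "continuous_on UNIV \<phi>" "continuous_on UNIV \<phi>'"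
    "\<And>u. u \<le> a \<Longrightarrow> \<phi> u = \<theta>" "\<And>u. b \<le> u \<Longrightarrow> \<phi> u = 0"
    "\<And>u. 0 \<le> u \<Longrightarrow> \<bar>\<phi> u\<bar> + 2 * u * \<bar>\<phi>' u\<bar> \<le> (1 + 4 * b / (b - a)) * \<bar>\<theta>\<bar>"
proof
  let ?x = "\<lambda>u. (u - a) / (b - a)"
  let ?\<phi> = "\<lambda>u. \<theta> * (1 - smooth_step (?x u))"
  show "(?\<phi> has_real_derivative \<theta> * (- smooth_step_deriv (?x u) / (b - a))) (at u)" for u
  proof -
    have "(?x has_real_derivative 1 / (b - a)) (at u)"
      using assms(2) by (auto intro!: derivative_eq_intros)
    from DERIV_cmult[OF DERIV_diff[OF DERIV_const DERIV_chain2[OF has_real_derivative_smooth_step this]]]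
    show ?thesis
      by simp
  qed
  then show "continuous_on UNIV ?\<phi>"
    by (meson DERIV_isCont continuous_at_imp_continuous_on)
  show "continuous_on UNIV (\<lambda>u. \<theta> * (- smooth_step_deriv (?x u) / (b - a)))"
    using assms(2)
    by (intro continuous_intros continuous_on_compose2[OF continuous_on_smooth_step_deriv]) auto
  show "?\<phi> u = \<theta>" if "u \<le> a" for u
    using that assms by (simp add: smooth_step_eq_0 divide_nonpos_pos)
  show "?\<phi> u = 0" if "b \<le> u" for u
    using that assms by (simp add: smooth_step_eq_1)
  show "\<bar>?\<phi> u\<bar> + 2 * u * \<bar>\<theta> * (- smooth_step_deriv (?x u) / (b - a))\<bar>
      \<le> (1 + 4 * b / (b - a)) * \<bar>\<theta>\<bar>" if "0 \<le> u" for u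
  proof -
    have "\<bar>1 - smooth_step (?x u)\<bar> \<le> 1"
      using smooth_step_bounds[of "?x u"] by linarith
    moreover have "u * smooth_step_deriv (?x u) \<le> b * 2"
      by (rule mult_smooth_step_deriv_le[OF assms that])
    then have "2 * u * \<bar>- smooth_step_deriv (?x u) / (b - a)\<bar> \<le> 4 * b / (b - a)"
      using assms that smooth_step_deriv_bounds[of "?x u"]
      by (simp add: abs_mult divide_right_mono)
    ultimately have "\<bar>1 - smooth_step (?x u)\<bar> + 2 * u * \<bar>- smooth_step_deriv (?x u) / (b - a)\<bar>
        \<le> 1 + 4 * b / (b - a)"
      by linarith
    from mult_right_mono[OF this abs_ge_zero[of \<theta>]] show ?thesis
      unfolding abs_mult by (simp add: algebra_simps)
  qed
qed

section \<open>Area preservation\<close>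

lemma emeasure_image_unimodular:
  fixes f :: "real^'n::{finite,wellorder} \<Rightarrow> real^'n::_"
  assumes "inj f" "\<And>x. (f has_derivative (\<lambda>v. Df x *v v)) (at x)" "\<And>x. \<bar>det (Df x)\<bar> = 1"
    and S: "S \<in> sets lebesgue"
  shows "emeasure lebesgue (f ` S) = emeasure lebesgue S"
proof -
  define S' where "S' n = S \<inter> cball 0 (real n)" for n
  have S'_meas: "S' n \<in> lmeasurable" for n
    unfolding S'_def using S by (intro bounded_set_imp_lmeasurable) (auto intro: bounded_subset)
  have image_meas: "f ` S' n \<in> lmeasurable \<and> measure lebesgue (f ` S' n) = measure lebesgue (S' n)" for n
  proof (rule has_measure_differentiable_image[THEN iffD2])
    show "S' n \<in> sets lebesgue"
      using S'_meas by blast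
    show "(f has_derivative (\<lambda>v. Df x *v v)) (at x within S' n)" for x
      using assms(2) by (rule has_derivative_at_withinI)
    show "inj_on f (S' n)"
      using assms(1) by (rule inj_on_subset) simp
    show "((\<lambda>x. \<bar>det (matrix (\<lambda>v. Df x *v v))\<bar>) has_integral measure lebesgue (S' n)) (S' n)"
      using S'_meas[of n]
      by (simp add: assms(3) has_integral_integrable_integral lmeasurable_iff_integrable_on
          lmeasure_integral)
  qed
  have "incseq S'" "incseq (\<lambda>n. f ` S' n)"
    by (auto simp: incseq_def S'_def intro!: image_mono)
  have "(\<Union>n. S' n) = S"
    by (auto simp: S'_def real_arch_simple)
  then have "(\<Union>n. f ` S' n) = f ` S"
    by blast
  have "emeasure lebesgue (f ` S) = (SUP n. emeasure lebesgue (f ` S' n))"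
    unfolding \<open>(\<Union>n. f ` S' n) = f ` S\<close>[symmetric]
    by (rule SUP_emeasure_incseq[symmetric]) (use image_meas \<open>incseq (\<lambda>n. f ` S' n)\<close> in auto)
  also have "\<dots> = (SUP n. emeasure lebesgue (S' n))"
    using image_meas S'_meas by (simp add: emeasure_eq_measure2)
  also have "\<dots> = emeasure lebesgue S"
    unfolding \<open>(\<Union>n. S' n) = S\<close>[symmetric]
    by (rule SUP_emeasure_incseq) (use S'_meas \<open>incseq S'\<close> in auto)
  finally show ?thesis .
qed

lemma area_preserving_if_unimodular:
  fixes h :: "real^2 \<Rightarrow> real^2"
  assumes "bij h" "C1_with_deriv h Dh" "\<And>z. \<bar>det (Dh z)\<bar> = 1"
  shows "area_preserving h"
proof -
  have deriv: "(h has_derivative (\<lambda>v. Dh z *v v)) (at z)" for z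
    using assms(2) by (simp add: C1_with_deriv_def)
  then have "continuous_on UNIV h"
    by (meson continuous_at_imp_continuous_on has_derivative_continuous)
  then have meas: "h \<in> borel_measurable borel"
    by (rule borel_measurable_continuous_onI)
  have "emeasure lborel (h -` S) = emeasure lborel S" if "S \<in> sets borel" for S
  proof -
    have "h -` S \<in> sets borel"
      using measurable_sets_borel[OF meas that] by simp
    then have "emeasure lborel (h -` S) = emeasure lebesgue (h -` S)"
      by simp
    also have "\<dots> = emeasure lebesgue (h ` (h -` S))"
      using \<open>h -` S \<in> sets borel\<close>
      by (intro emeasure_image_unimodular[symmetric, OF bij_is_inj[OF assms(1)] deriv assms(3)]) simp
    also have "h ` (h -` S) = S"
      using bij_is_surj[OF assms(1)] by (simp add: surj_image_vimage_eq)
    also have "emeasure lebesgue S = emeasure lborel S"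
      using that by simp
    finally show ?thesis .
  qed
  with meas show ?thesis
    by (simp add: area_preserving_def)
qed

section \<open>Twists along ellipses\<close>

definition elliptic_twist :: "real^2^2 \<Rightarrow> (real \<Rightarrow> real) \<Rightarrow> real^2 \<Rightarrow> real^2" where
  "elliptic_twist A \<phi> z = A *v twist \<phi> (matrix_inv A *v z)"

definition elliptic_twist_deriv ::
    "real^2^2 \<Rightarrow> (real \<Rightarrow> real) \<Rightarrow> (real \<Rightarrow> real) \<Rightarrow> real^2 \<Rightarrow> real^2^2" where
  "elliptic_twist_deriv A \<phi> \<phi>' z = A ** twist_deriv \<phi> \<phi>' (matrix_inv A *v z) ** matrix_inv A"

lemma C1_with_deriv_conj:
  assumes "C1_with_deriv g Dg"
  shows "C1_with_deriv (\<lambda>z. A *v g (B *v z)) (\<lambda>z. A ** Dg (B *v z) ** B)"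
  unfolding C1_with_deriv_def
proof (intro conjI allI)
  fix z :: "real^2"
  have "((\<lambda>y. A *v y) \<circ> g \<circ> (\<lambda>z. B *v z) has_derivative
      (\<lambda>v. A *v v) \<circ> (\<lambda>v. Dg (B *v z) *v v) \<circ> (\<lambda>v. B *v v)) (at z)"
    using assms unfolding C1_with_deriv_def
    by (intro diff_chain_at bounded_linear_imp_has_derivative matrix_vector_mul_bounded_linear) auto
  then show "((\<lambda>z. A *v g (B *v z)) has_derivative (\<lambda>v. (A ** Dg (B *v z) ** B) *v v)) (at z)"
    by (simp add: o_def matrix_vector_mul_assoc)
  have "continuous_on UNIV (\<lambda>z. Dg (B *v z))"
    using assms unfolding C1_with_deriv_def
    by (auto intro: continuous_on_compose2 linear_continuous_on matrix_vector_mul_bounded_linear)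
  then show "continuous_on UNIV (\<lambda>z. A ** Dg (B *v z) ** B)"
    unfolding matrix_matrix_mult_def by (intro continuous_intros)
qed

lemma elliptic_twist_inverse:
  "det A = 1 \<Longrightarrow> elliptic_twist A (\<lambda>u. - \<phi> u) (elliptic_twist A \<phi> z) = z"
  by (simp add: elliptic_twist_def matrix_inv_sl2_cancel twist_inverse)

lemma C1_with_deriv_elliptic_twist:
  assumes "\<And>u. (\<phi> has_real_derivative \<phi>' u) (at u)" "continuous_on UNIV \<phi>" "continuous_on UNIV \<phi>'"
  shows "C1_with_deriv (elliptic_twist A \<phi>) (elliptic_twist_deriv A \<phi> \<phi>')"
proof -
  have "C1_with_deriv (twist \<phi>) (twist_deriv \<phi> \<phi>')"
    using has_derivative_twist[OF assms(1)] continuous_on_twist_deriv[OF assms(2,3)]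
    by (simp add: C1_with_deriv_def)
  from C1_with_deriv_conj[OF this, of A "matrix_inv A"] show ?thesis
    by (simp add: elliptic_twist_def[abs_def] elliptic_twist_deriv_def[abs_def])
qed

lemma C1_diffeo_elliptic_twist:
  assumes "det A = 1"
    and "\<And>u. (\<phi> has_real_derivative \<phi>' u) (at u)" "continuous_on UNIV \<phi>" "continuous_on UNIV \<phi>'"
  shows "C1_diffeo (elliptic_twist A \<phi>)"
proof -
  let ?h = "elliptic_twist A \<phi>" and ?g = "elliptic_twist A (\<lambda>u. - \<phi> u)"
  have "?g \<circ> ?h = id" "?h \<circ> ?g = id"
    using elliptic_twist_inverse[OF assms(1), of \<phi>] elliptic_twist_inverse[OF assms(1), of "\<lambda>u. - \<phi> u"]
    by (simp_all add: fun_eq_iff)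
  moreover have "C1_with_deriv ?g (elliptic_twist_deriv A (\<lambda>u. - \<phi> u) (\<lambda>u. - \<phi>' u))"
    using assms(2-4) by (intro C1_with_deriv_elliptic_twist DERIV_minus continuous_intros)
  ultimately show ?thesis
    unfolding C1_diffeo_def
    using C1_with_deriv_elliptic_twist[OF assms(2-4)] o_bij inv_unique_comp by metis
qed

lemma det_elliptic_twist_deriv: "det A = 1 \<Longrightarrow> det (elliptic_twist_deriv A \<phi> \<phi>' z) = 1"
  by (simp add: elliptic_twist_deriv_def det_mul det_twist_deriv det_matrix_inv_sl2)

lemma area_preserving_elliptic_twist:
  assumes "det A = 1"
    and "\<And>u. (\<phi> has_real_derivative \<phi>' u) (at u)" "continuous_on UNIV \<phi>" "continuous_on UNIV \<phi>'"
  shows "area_preserving (elliptic_twist A \<phi>)"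
  using C1_diffeo_elliptic_twist[OF assms] C1_with_deriv_elliptic_twist[OF assms(2-4)]
  by (intro area_preserving_if_unimodular) (auto simp: C1_diffeo_def det_elliptic_twist_deriv assms(1))

lemma elliptic_twist_image_ellipse:
  assumes "det A = 1"
  shows "elliptic_twist A \<phi> ` ((\<lambda>x. A *v x) ` cball 0 \<rho>) = (\<lambda>x. A *v x) ` cball 0 \<rho>"
proof -
  have "elliptic_twist A \<phi> ` ((\<lambda>x. A *v x) ` cball 0 \<rho>) = (\<lambda>x. A *v x) ` (twist \<phi> ` cball 0 \<rho>)"
    using assms by (simp add: image_image elliptic_twist_def matrix_inv_sl2_cancel)
  then show ?thesis
    by (simp add: twist_image_cball)
qed

lemma opnorm_elliptic_twist_deriv_sub_id_le:
  assumes "det A = 1" "\<And>u. 0 \<le> u \<Longrightarrow> \<bar>\<phi> u\<bar> + 2 * u * \<bar>\<phi>' u\<bar> \<le> c"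
  shows "opnorm (elliptic_twist_deriv A \<phi> \<phi>' z - mat 1) \<le> opnorm A * opnorm (matrix_inv A) * c"
proof -
  let ?y = "matrix_inv A *v z"
  have "opnorm (elliptic_twist_deriv A \<phi> \<phi>' z - mat 1)
      \<le> opnorm A * opnorm (twist_deriv \<phi> \<phi>' ?y - mat 1) * opnorm (matrix_inv A)"
    unfolding elliptic_twist_deriv_def
    by (rule opnorm_conj_sub_id_le) (simp add: matrix_inv_invertible invertible_sl2 assms(1))
  also have "\<dots> \<le> opnorm A * c * opnorm (matrix_inv A)"
    using order_trans[OF opnorm_twist_deriv_sub_id_le[of \<phi> \<phi>' ?y] assms(2)[OF zero_le_power2]]
    by (intro mult_right_mono mult_left_mono opnorm_nonneg) simp_all
  finally show ?thesis
    by (simp add: mult_ac)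
qed

lemma scaleR_image_ellipse:
  fixes A :: "real^'n^'m"
  assumes "0 < t"
  shows "(\<lambda>x. t *\<^sub>R x) ` ((\<lambda>x. A *v x) ` cball 0 r) = (\<lambda>x. A *v x) ` cball 0 (t * r)"
proof -
  have "(\<lambda>x. t *\<^sub>R x) ` ((\<lambda>x. A *v x) ` cball 0 r) = (\<lambda>x. A *v x) ` ((\<lambda>x. t *\<^sub>R x) ` cball 0 r)"
    by (simp add: image_image matrix_vector_mult_scaleR)
  then show ?thesis
    using assms by (simp add: cball_scale)
qed

lemma elliptic_twist_outside_ellipse:
  assumes A: "det A = 1" and "0 \<le> r" "\<And>u. r\<^sup>2 \<le> u \<Longrightarrow> \<phi> u = 0"
    and z: "z \<notin> (\<lambda>x. A *v x) ` cball 0 r"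
  shows "elliptic_twist A \<phi> z = z"
proof -
  have "matrix_inv A *v z \<notin> cball 0 r"
    using z matrix_inv_sl2_cancel(2)[OF A, of z] by (metis image_eqI)
  then have "r\<^sup>2 \<le> (norm (matrix_inv A *v z))\<^sup>2"
    using \<open>0 \<le> r\<close> by (intro power_mono) auto
  then show ?thesis
    using A assms(3) by (simp add: elliptic_twist_def twist_def matrix_inv_sl2_cancel)
qed

lemma elliptic_twist_inside_ellipse:
  assumes A: "det A = 1" and "0 \<le> k" "\<And>u. u \<le> k * r\<^sup>2 \<Longrightarrow> \<phi> u = \<theta>"
    and z: "z \<in> (\<lambda>x. sqrt k *\<^sub>R x) ` ((\<lambda>x. A *v x) ` cball 0 r)"
  shows "elliptic_twist A \<phi> z = A *v rot \<theta> (matrix_inv A *v z)"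
proof -
  obtain x where x: "norm x \<le> r" "z = sqrt k *\<^sub>R (A *v x)"
    using z by auto
  then have "(norm (matrix_inv A *v z))\<^sup>2 = k * (norm x)\<^sup>2"
    using A \<open>0 \<le> k\<close> by (simp add: matrix_vector_mult_scaleR matrix_inv_sl2_cancel power_mult_distrib)
  also have "\<dots> \<le> k * r\<^sup>2"
    using x \<open>0 \<le> k\<close> by (intro mult_left_mono power_mono) auto
  finally show ?thesis
    by (simp add: elliptic_twist_def twist_def assms(3))
qed

lemma norm_sub_le_diameter:
  fixes f :: "'a::real_normed_vector \<Rightarrow> 'a"
  assumes "bounded S" "f ` S \<subseteq> S" "\<And>z. z \<notin> S \<Longrightarrow> f z = z"
  shows "norm (f z - z) \<le> diameter S"
proof (cases "z \<in> S")
  case True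
  then show ?thesis
    using assms(1,2) diameter_bounded_bound[of S "f z" z] by (auto simp: dist_norm)
qed (simp add: assms diameter_ge_0)

lemma ellipse_twist_exists:
  fixes A :: "real^2^2" and r k \<theta> :: real
  assumes A: "det A = 1" and "0 < r" "0 < k" "k < 1"
  defines "B \<equiv> (\<lambda>x. A *v x) ` cball 0 r"
  obtains h Dh where "C1_diffeo h" "area_preserving h" "C1_with_deriv h Dh"
    "\<And>z. z \<notin> B \<Longrightarrow> h z = z"
    "\<And>z. z \<in> (\<lambda>x. sqrt k *\<^sub>R x) ` B \<Longrightarrow> h z = A *v rot \<theta> (matrix_inv A *v z)"
    "\<And>t. 0 < t \<Longrightarrow> h ` ((\<lambda>x. t *\<^sub>R x) ` B) = (\<lambda>x. t *\<^sub>R x) ` B"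
    "\<And>z. norm (h z - z) \<le> diameter B"
    "\<And>z. opnorm (Dh z - mat 1) \<le> opnorm A * opnorm (matrix_inv A) * ((1 + 4 / (1 - k)) * \<bar>\<theta>\<bar>)"
proof -
  have "0 \<le> k * r\<^sup>2" "k * r\<^sup>2 < r\<^sup>2"
    using assms by auto
  then obtain \<phi> \<phi>' where \<phi>: "\<And>u. (\<phi> has_real_derivative \<phi>' u) (at u)"
      "continuous_on UNIV \<phi>" "continuous_on UNIV \<phi>'"
      and inner: "\<And>u. u \<le> k * r\<^sup>2 \<Longrightarrow> \<phi> u = \<theta>" and outer: "\<And>u. r\<^sup>2 \<le> u \<Longrightarrow> \<phi> u = 0"
      and bound: "\<And>u. 0 \<le> u \<Longrightarrow> \<bar>\<phi> u\<bar> + 2 * u * \<bar>\<phi>' u\<bar> \<le> (1 + 4 * r\<^sup>2 / (r\<^sup>2 - k * r\<^sup>2)) * \<bar>\<theta>\<bar>"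
    using C1_cutoff[where \<theta> = \<theta>] by blast
  let ?h = "elliptic_twist A \<phi>"
  have B_bounded: "bounded B"
    unfolding B_def by (intro bounded_linear_image bounded_cball matrix_vector_mul_bounded_linear)
  have outside: "?h z = z" if "z \<notin> B" for z
    using elliptic_twist_outside_ellipse[where \<phi> = \<phi> and r = r, OF A _ outer] that \<open>0 < r\<close>
    by (simp add: B_def)
  have ellipses: "?h ` ((\<lambda>x. t *\<^sub>R x) ` B) = (\<lambda>x. t *\<^sub>R x) ` B" if "0 < t" for t
    using that A by (simp add: B_def scaleR_image_ellipse elliptic_twist_image_ellipse)
  have "4 * r\<^sup>2 / (r\<^sup>2 - k * r\<^sup>2) = 4 * r\<^sup>2 / ((1 - k) * r\<^sup>2)"
    by (simp add: algebra_simps)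
  also have "\<dots> = 4 / (1 - k)"
    using \<open>0 < r\<close> by simp
  finally have "opnorm (elliptic_twist_deriv A \<phi> \<phi>' z - mat 1)
      \<le> opnorm A * opnorm (matrix_inv A) * ((1 + 4 / (1 - k)) * \<bar>\<theta>\<bar>)" for z
    using opnorm_elliptic_twist_deriv_sub_id_le[OF A bound] by simp
  moreover have "norm (?h z - z) \<le> diameter B" for z
    using ellipses[of 1] by (intro norm_sub_le_diameter B_bounded outside) auto
  moreover have "?h z = A *v rot \<theta> (matrix_inv A *v z)" if "z \<in> (\<lambda>x. sqrt k *\<^sub>R x) ` B" for z
    using elliptic_twist_inside_ellipse[where \<phi> = \<phi> and k = k and r = r, OF A _ inner] that \<open>0 < k\<close>
    by (simp add: B_def)
  ultimately show ?thesis
    using that[OF C1_diffeo_elliptic_twist[OF A \<phi>] area_preserving_elliptic_twist[OF A \<phi>]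
        C1_with_deriv_elliptic_twist[OF \<phi>] outside] ellipses by blast
qed

lemma invariant_ellipse_twist:
  assumes "centered_ellipse_ecc_le E B" "det L = 1" "(\<lambda>x. L *v x) ` B = B"
    and small: "E\<^sup>2 * opnorm (L - mat 1) \<le> 1/2" and "0 < k" "k < 1"
  obtains h Dh where "C1_diffeo h" "area_preserving h" "C1_with_deriv h Dh"
    "\<And>z. z \<notin> B \<Longrightarrow> h z = z" "\<And>z. z \<in> (\<lambda>x. sqrt k *\<^sub>R x) ` B \<Longrightarrow> h z = L *v z"
    "\<And>t. 0 < t \<Longrightarrow> h ` ((\<lambda>x. t *\<^sub>R x) ` B) = (\<lambda>x. t *\<^sub>R x) ` B"
    "\<And>z. norm (h z - z) \<le> diameter B"
    "\<And>z. opnorm (Dh z - mat 1) \<le> 2 * E\<^sup>2 * E\<^sup>2 * (1 + 4 / (1 - k)) * opnorm (L - mat 1)"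
proof -
  obtain A r where A: "det A = 1" "opnorm A \<le> E" "0 < r" and B: "B = (\<lambda>x. A *v x) ` cball 0 r"
    using assms(1) by (auto simp: centered_ellipse_ecc_le_def)
  let ?\<delta> = "opnorm A * opnorm (matrix_inv A)"
  have "?\<delta> \<le> E\<^sup>2"
    using opnorm_matrix_inv_sl2_le[OF A(1)] A(2) opnorm_nonneg
    by (auto simp: power2_eq_square intro: mult_mono order_trans)
  then have \<delta>: "?\<delta> * opnorm (L - mat 1) \<le> E\<^sup>2 * opnorm (L - mat 1)"
    by (intro mult_right_mono opnorm_nonneg)
  obtain \<theta> where \<theta>: "\<bar>\<theta>\<bar> \<le> 2 * (?\<delta> * opnorm (L - mat 1))"
    and L: "\<And>z. L *v z = A *v rot \<theta> (matrix_inv A *v z)"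
    using invariant_ellipse_sl2_is_conj_small_rotation[OF A(1) assms(2) A(3)
        assms(3)[unfolded B] order_trans[OF \<delta> small]]
    by blast
  obtain h Dh where h: "C1_diffeo h" "area_preserving h" "C1_with_deriv h Dh"
    "\<And>z. z \<notin> B \<Longrightarrow> h z = z" "\<And>z. z \<in> (\<lambda>x. sqrt k *\<^sub>R x) ` B \<Longrightarrow> h z = L *v z"
    "\<And>t. 0 < t \<Longrightarrow> h ` ((\<lambda>x. t *\<^sub>R x) ` B) = (\<lambda>x. t *\<^sub>R x) ` B"
    "\<And>z. norm (h z - z) \<le> diameter B"
    and Dh: "\<And>z. opnorm (Dh z - mat 1) \<le> ?\<delta> * ((1 + 4 / (1 - k)) * \<bar>\<theta>\<bar>)"
    using ellipse_twist_exists[OF A(1,3) assms(5,6), of \<theta>]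
    unfolding B[symmetric] L[symmetric] by blast
  have "?\<delta> * ((1 + 4 / (1 - k)) * \<bar>\<theta>\<bar>)
      \<le> E\<^sup>2 * ((1 + 4 / (1 - k)) * (2 * (E\<^sup>2 * opnorm (L - mat 1))))"
    using \<open>?\<delta> \<le> E\<^sup>2\<close> \<theta> \<delta> \<open>k < 1\<close>
    by (intro mult_mono mult_left_mono) (auto intro: mult_nonneg_nonneg opnorm_nonneg)
  also have "\<dots> = 2 * E\<^sup>2 * E\<^sup>2 * (1 + 4 / (1 - k)) * opnorm (L - mat 1)"
    by (simp add: mult_ac)
  finally have "opnorm (Dh z - mat 1) \<le> 2 * E\<^sup>2 * E\<^sup>2 * (1 + 4 / (1 - k)) * opnorm (L - mat 1)" for z
    using Dh[of z] by (rule order_trans[rotated])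
  with h show ?thesis
    by (rule that)
qed

theorem mainTheorem11:
  fixes \<epsilon>\<^sub>1 k E :: real
  assumes "\<epsilon>\<^sub>1 > 0" and "0 < k" and "k < 1" and "E \<ge> 1"
  shows "\<exists>\<epsilon>>0. \<forall>(B :: (real^2) set) (L :: real^2^2).
           centered_ellipse_ecc_le E B \<and> diameter B \<le> \<epsilon>\<^sub>1 \<and>
           det L = 1 \<and> opnorm (L - mat 1) < \<epsilon> \<and> (\<lambda>x. L *v x) ` B = B \<longrightarrow>
           (\<exists>h Dh. C1_diffeo h \<and> area_preserving h \<and> C1_with_deriv h Dh \<and>
              (\<forall>z. z \<notin> B \<longrightarrow> h z = z) \<and>
              (\<forall>z \<in> (\<lambda>x. sqrt k *\<^sub>R x) ` B. h z = L *v z) \<and>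
              (\<forall>t>0. h ` ((\<lambda>x. t *\<^sub>R x) ` B) = (\<lambda>x. t *\<^sub>R x) ` B) \<and>
              (\<forall>z. norm (h z - z) \<le> \<epsilon>\<^sub>1) \<and>
              (\<forall>z. opnorm (Dh z - mat 1) \<le> \<epsilon>\<^sub>1))"
proof -
  define K where "K = 1 + 4 / (1 - k)"
  txt \<open>The first bound on \<open>\<epsilon>\<close> makes \<open>A\<^sup>-\<^sup>1 L A\<close> a small rotation, the second controls \<open>Dh\<close>.\<close>
  define \<epsilon> where "\<epsilon> = min (1 / (2 * E\<^sup>2)) (\<epsilon>\<^sub>1 / (2 * E\<^sup>2 * E\<^sup>2 * K))"
  have "0 < K" "0 < E\<^sup>2"
    unfolding K_def using assms(3,4) by (auto intro: add_pos_pos)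
  then have "0 < \<epsilon>"
    unfolding \<epsilon>_def using assms(1) by simp
  show ?thesis
  proof (intro exI[of _ \<epsilon>] conjI allI impI \<open>0 < \<epsilon>\<close>, elim conjE)
    fix B :: "(real^2) set" and L :: "real^2^2"
    assume B: "centered_ellipse_ecc_le E B" "diameter B \<le> \<epsilon>\<^sub>1" "det L = 1"
      "opnorm (L - mat 1) < \<epsilon>" "(\<lambda>x. L *v x) ` B = B"
    have "E\<^sup>2 * opnorm (L - mat 1) \<le> E\<^sup>2 * (1 / (2 * E\<^sup>2))"
      "2 * E\<^sup>2 * E\<^sup>2 * K * opnorm (L - mat 1) \<le> 2 * E\<^sup>2 * E\<^sup>2 * K * (\<epsilon>\<^sub>1 / (2 * E\<^sup>2 * E\<^sup>2 * K))"
      using B(4) \<open>0 < K\<close> \<open>0 < E\<^sup>2\<close> unfolding \<epsilon>_def by (intro mult_left_mono; simp)+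
    then have "E\<^sup>2 * opnorm (L - mat 1) \<le> 1/2" "2 * E\<^sup>2 * E\<^sup>2 * K * opnorm (L - mat 1) \<le> \<epsilon>\<^sub>1"
      using \<open>0 < K\<close> \<open>0 < E\<^sup>2\<close> by simp_all
    then obtain h Dh where h: "C1_diffeo h" "area_preserving h" "C1_with_deriv h Dh"
      "\<And>z. z \<notin> B \<Longrightarrow> h z = z" "\<And>z. z \<in> (\<lambda>x. sqrt k *\<^sub>R x) ` B \<Longrightarrow> h z = L *v z"
      "\<And>t. 0 < t \<Longrightarrow> h ` ((\<lambda>x. t *\<^sub>R x) ` B) = (\<lambda>x. t *\<^sub>R x) ` B"
      and displacement: "\<And>z. norm (h z - z) \<le> diameter B"
      and Dh: "\<And>z. opnorm (Dh z - mat 1) \<le> 2 * E\<^sup>2 * E\<^sup>2 * K * opnorm (L - mat 1)"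
      using invariant_ellipse_twist[OF B(1,3,5) _ assms(2,3)] unfolding K_def[symmetric] by blast
    then show "\<exists>h Dh. C1_diffeo h \<and> area_preserving h \<and> C1_with_deriv h Dh \<and>
              (\<forall>z. z \<notin> B \<longrightarrow> h z = z) \<and>
              (\<forall>z \<in> (\<lambda>x. sqrt k *\<^sub>R x) ` B. h z = L *v z) \<and>
              (\<forall>t>0. h ` ((\<lambda>x. t *\<^sub>R x) ` B) = (\<lambda>x. t *\<^sub>R x) ` B) \<and>
              (\<forall>z. norm (h z - z) \<le> \<epsilon>\<^sub>1) \<and>
              (\<forall>z. opnorm (Dh z - mat 1) \<le> \<epsilon>\<^sub>1)"
      using order_trans[OF displacement B(2)] order_trans[OF Dh \<open>2 * E\<^sup>2 * E\<^sup>2 * K * _ \<le> \<epsilon>\<^sub>1\<close>]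
      by (intro exI[of _ h] exI[of _ Dh] conjI allI impI ballI) auto
  qed
qed

end
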